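(* Let $X$ be a finite dimensional real Hilbert space and $\bar{x}\in X$. Let $H_{1}\subset X$ be a closed halfspace and $x_{1}=P_{H_{1}}(\bar{x})$. Let $H_{2}\subset X$ be a closed halfspace with $H_{1}\cap H_{2}\neq\emptyset$, let $d=d(x_{1},H_{2})$, and let $x_{2}=P_{H_{1}\cap H_{2}}(\bar{x})$. Then $\|\bar{x}-x_{2}\|^{2}\geq\|\bar{x}-x_{1}\|^{2}+d^{2}$.
   Context: $P_{S}(y)$ denotes the (metric) projection of $y$ onto a nonempty closed convex set $S$, and $d(y,S)=\inf_{s\in S}\|y-s\|$. *)

theory Defs
  imports "HOL-Analysis.Analysis"
begin

definition closed_halfspace :: "'a::real_inner set \<Rightarrow> bool" where
  "closed_halfspace H \<longleftrightarrow> (\<exists>a b. a \<noteq> 0 \<and> H = {x. inner a x \<le> b})"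

end

theory Submission
  imports Defs
begin

text \<open>The obtuse-angle characterisation of the projection x1 of xbar onto H1 makes the
  triangle xbar, x1, x2 obtuse at x1, so the squared distance from xbar to x2 is at least
  the sum of the squared distances along the two legs; and the leg from x1 to x2 ends in
  H2, so it is at least d(x1, H2).\<close>

lemma closest_point_pythagoras_le:
  fixes S :: "'a::{real_inner,heine_borel} set"
  assumes "convex S" "closed S" "y \<in> S"
  shows "(norm (x - closest_point S x))\<^sup>2 + (norm (closest_point S x - y))\<^sup>2 \<le> (norm (x - y))\<^sup>2"
proof -
  let ?p = "closest_point S x"
  have obtuse: "inner (x - ?p) (y - ?p) \<le> 0"
    using closest_point_dot[OF assms] .
  have "(norm (x - y))\<^sup>2 = (norm ((x - ?p) - (y - ?p)))\<^sup>2"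
    by simp
  also have "\<dots> = (norm (x - ?p))\<^sup>2 + (norm (y - ?p))\<^sup>2 - 2 * inner (x - ?p) (y - ?p)"
    using dot_norm_neg[of "x - ?p" "y - ?p"] by simp
  finally show ?thesis
    using obtuse by (simp add: norm_minus_commute)
qed

lemma closest_point_inter_ge:
  fixes S T :: "'a::{real_inner,heine_borel} set"
  assumes "convex S" "closed S" "closed T" "S \<inter> T \<noteq> {}"
  shows "(norm (x - closest_point (S \<inter> T) x))\<^sup>2 \<ge>
           (norm (x - closest_point S x))\<^sup>2 + (infdist (closest_point S x) T)\<^sup>2"
proof -
  define p where "p = closest_point S x"
  define q where "q = closest_point (S \<inter> T) x"
  have "q \<in> S \<inter> T"
    unfolding q_def using assms closest_point_in_set[of "S \<inter> T"] by blast
  then have "infdist p T \<le> norm (p - q)"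
    using infdist_le[of q T p] by (simp add: dist_norm)
  then have "(infdist p T)\<^sup>2 \<le> (norm (p - q))\<^sup>2"
    by (simp add: infdist_nonneg power_mono)
  moreover have "(norm (x - p))\<^sup>2 + (norm (p - q))\<^sup>2 \<le> (norm (x - q))\<^sup>2"
    unfolding p_def using closest_point_pythagoras_le assms(1,2) \<open>q \<in> S \<inter> T\<close> by blast
  ultimately show ?thesis
    unfolding p_def q_def by linarith
qed

lemma closed_halfspace_closed_convex:
  assumes "closed_halfspace H"
  shows "closed H" "convex H"
  using assms closed_halfspace_le convex_halfspace_le
  unfolding closed_halfspace_def by auto

theorem lemma2p5:
  fixes xbar :: "'a::euclidean_space" and H1 H2 :: "'a set"
  assumes "closed_halfspace H1" and "closed_halfspace H2"
    and "H1 \<inter> H2 \<noteq> {}"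
  shows "(norm (xbar - closest_point (H1 \<inter> H2) xbar))\<^sup>2 \<ge>
           (norm (xbar - closest_point H1 xbar))\<^sup>2 + (infdist (closest_point H1 xbar) H2)\<^sup>2"
  using closest_point_inter_ge assms closed_halfspace_closed_convex by blast

end
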